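(* Let $f:\mathbb{R}^d\to\mathbb{R}$ be bounded below with $f^* := \inf_{x} f(x)$, and let $n\ge 1$ clients be indexed by $[n]=\{1,\dots,n\}$. Let ${\cal G}\subseteq[n]$ be a nonempty set with $G:=|{\cal G}|$ (the clients whose data distribution coincides with that of the target client). Consider the following process (\textsc{MeritFed}) with stepsize $\gamma>0$ and starting point $x^0\in\mathbb{R}^d$: at each iteration $t=0,1,\dots$, every client $i\in[n]$ sends a vector $g_i^t\in\mathbb{R}^d$ to the server, then the server chooses a (possibly random) weight vector $w^{t+1}\in\Delta_1^n$ and sets $$x^{t+1}=x^t-\gamma\sum_{i=1}^n w_i^{t+1} g_i^t .$$ Assume: 1. (Bounded variance) For every $t$ and every $i\in{\cal G}$, $g_i^t=g_i(x^t,\boldsymbol{\xi}_i^t)$ is a stochastic gradient computed from a fresh sample, satisfying $\mathbb{E}[g_i^t\mid x^t]=\nabla f(x^t)$ and $\mathbb{E}[\|g_i^t-\nabla f(x^t)\|^2\mid x^t]\le\sigma^2$ for some $\sigma\ge 0$, and the noises $g_i^t-\nabla f(x^t)$, $i\in{\cal G}$, are mutually independent conditionally on $x^t$. The vectors $g_i^t$ for $i\notin{\cal G}$ are arbitrary (no assumption is made on them). 2. (Smoothness) $f$ is $L$-smooth: $f(x)\le f(y)+\langle\nabla f(y),x-y\rangle+\frac{L}{2}\|x-y\|^2$ for all $x,y\in\mathbb{R}^d$. 3. (Inexact weight selection) For some $\delta\ge 0$ and every $t$, $$\mathbb{E}\big[f(x^{t+1})\mid x^t,\{g_i^t\}_{i=1}^n\big]-\min_{w\in\Delta_1^n}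 f\Big(x^t-\gamma\sum_{i=1}^n w_i g_i^t\Big)\le\delta .$$ If $\gamma\le\frac{1}{2L}$, then for every $T\ge1$, $$\frac1T\sum_{t=0}^{T-1}\mathbb{E}\|\nabla f(x^t)\|^2\le\frac{2(f(x^0)-f^* )}{T\gamma}+\frac{2\sigma^2\gamma L}{G}+\frac{2\delta}{\gamma}.$$ If, in addition, $f$ satisfies the Polyak–Łojasiewicz condition with parameter $\mu>0$, i.e. $f^*\ge f(x)-\frac{1}{2\mu}\|\nabla f(x)\|^2$ for all $x\in\mathbb{R}^d$, then for every $T\ge 1$, $$\mathbb{E}f(x^T)-f^*\le(1-\gamma\mu)^T\big(f(x^0)-f^*\big)+\frac{\sigma^2\gamma L}{\mu G}+\frac{\delta}{\gamma\mu}.$$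
   Context: $\Delta_1^n=\{w\in\mathbb{R}^n:\sum_{i=1}^n w_i=1,\ w_i\ge0\ \forall i\}$ denotes the unit simplex. $\|\cdot\|$ is the Euclidean norm. The target problem is $\min_x f(x)$ where $f(x)=\mathbb{E}_{\xi\sim{\cal D}_1}[f_\xi(x)]$ is the expected loss of the target client; clients in ${\cal G}$ have the same data distribution ${\cal D}_1$, so their stochastic gradients are unbiased for $\nabla f$. Expectations $\mathbb{E}$ are over all randomness of the process. *)

theory Defs
  imports "HOL-Probability.Probability"
begin

definition simplex1 :: "nat \<Rightarrow> (nat \<Rightarrow> real) set" where
  "simplex1 n = {w. (\<forall>i\<in>{1..n}. 0 \<le> w i) \<and> (\<Sum>i\<in>{1..n}. w i) = 1}"

definition gen_sigma :: "'a measure \<Rightarrow> ('a \<Rightarrow> 'b::topological_space) set \<Rightarrow> 'a measure" where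
  "gen_sigma M Xs = sigma (space M) (\<Union>X\<in>Xs. {X -` A \<inter> space M | A. A \<in> sets borel})"

definition cond_indep_vars ::
  "'a measure \<Rightarrow> 'a measure \<Rightarrow> ('i \<Rightarrow> 'a \<Rightarrow> 'b::topological_space) \<Rightarrow> 'i set \<Rightarrow> bool" where
  "cond_indep_vars M F X I \<longleftrightarrow>
     (\<forall>J A. J \<subseteq> I \<longrightarrow> finite J \<longrightarrow> J \<noteq> {} \<longrightarrow>
        (\<forall>j\<in>J. A j \<in> sets (gen_sigma M {X j})) \<longrightarrow>
        (AE \<omega> in M. real_cond_exp M F (indicator (\<Inter>j\<in>J. A j)) \<omega>
                     = (\<Prod>j\<in>J. real_cond_exp M F (indicator (A j)) \<omega>)))"

end

theory Submission
  imports Defs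
begin

text \<open>
  Compare the step taken by the server with the step that gives weight 1/G to each client of
  Gs. By the inexact weight selection, the expected loss after the actual step exceeds the loss
  after this uniform step by at most \<delta>. The uniform step moves along the gradient plus the
  average of G conditionally independent centred noises, so the noise contributes no first-order
  term and only \<sigma>^2/G to the second moment; L-smoothness with \<gamma> \<le> 1/(2L) then gives
  E f(x(t+1)) \<le> E f(x t) - \<gamma>/2 E \<parallel>\<nabla>f(x t)\<parallel>^2 + \<delta> + L \<gamma>^2 \<sigma>^2/(2G).
  Telescoping this inequality gives the first bound; under the PL condition it becomes a
  contraction by 1 - \<gamma>\<mu>.\<close>

lemma space_gen_sigma [simp]: "space (gen_sigma M Xs) = space M"
  unfolding gen_sigma_def by (rule space_measure_of) auto

lemma sets_gen_sigma:
  "sets (gen_sigma M Xs) = sigma_sets (space M) (\<Union>X\<in>Xs. {X -` A \<inter> space M | A. A \<in> sets borel})"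
  unfolding gen_sigma_def by (rule sets_measure_of) auto

lemma measurable_gen_sigma:
  assumes "X \<in> Xs"
  shows "X \<in> borel_measurable (gen_sigma M Xs)"
proof (rule measurableI)
  fix A :: "'b set"
  assume "A \<in> sets borel"
  then show "X -` A \<inter> space (gen_sigma M Xs) \<in> sets (gen_sigma M Xs)"
    unfolding sets_gen_sigma space_gen_sigma using assms by (intro sigma_sets.Basic) blast
qed auto

lemma sigma_finite_subalgebra_gen_sigma:
  assumes "prob_space M" "\<And>X. X \<in> Xs \<Longrightarrow> X \<in> borel_measurable M"
  shows "sigma_finite_subalgebra M (gen_sigma M Xs)"
proof -
  interpret prob_space M by fact
  have "sets (gen_sigma M Xs) \<subseteq> sets M"
    unfolding sets_gen_sigma
    by (rule sets.sigma_sets_subset) (use assms(2) measurable_sets in blast)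
  then have "finite_measure_subalgebra M (gen_sigma M Xs)"
    by unfold_locales (auto simp: subalgebra_def)
  then show ?thesis by (rule finite_measure_subalgebra_is_sigma_finite)
qed

lemma continuous_on_GDERIV:
  assumes "\<And>y. GDERIV f y :> gradf y"
  shows "continuous_on UNIV f"
  using assms
  by (metis differentiable_imp_continuous_on differentiable_def differentiable_on_def gderiv_def)

lemma GDERIV_difference_quotient_LIMSEQ:
  fixes f :: "'v::real_inner \<Rightarrow> real"
  assumes "GDERIV f y :> D"
  shows "(\<lambda>k. (f (y + (1 / real (Suc k)) *\<^sub>R b) - f y) * real (Suc k)) \<longlonglongrightarrow> inner D b"
proof -
  have "((\<lambda>t. y + t *\<^sub>R b) has_derivative (\<lambda>t. t *\<^sub>R b)) (at (0::real))"
    by (auto intro!: derivative_eq_intros)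
  from has_derivative_compose[OF this, of f "\<lambda>h. inner h D"] assms
  have "((\<lambda>t. f (y + t *\<^sub>R b)) has_real_derivative inner b D) (at 0)"
    by (simp add: gderiv_def has_field_derivative_def mult.commute[of _ "b \<bullet> D"])
  then have "((\<lambda>h. (f (y + h *\<^sub>R b) - f y) / h) \<longlongrightarrow> inner b D) (at 0)"
    using DERIV_def[of "\<lambda>t. f (y + t *\<^sub>R b)"] by simp
  moreover have "filterlim (\<lambda>k. 1 / real (Suc k)) (at 0) sequentially"
    by (rule filterlim_atI) (auto intro: LIMSEQ_Suc[OF lim_const_over_n] simp del: of_nat_Suc)
  ultimately have "(\<lambda>k. (f (y + (1 / real (Suc k)) *\<^sub>R b) - f y) / (1 / real (Suc k)))
      \<longlonglongrightarrow> inner b D"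
    by (rule filterlim_compose)
  then show ?thesis by (simp add: inner_commute)
qed

lemma borel_measurable_GDERIV:
  fixes f :: "'v::euclidean_space \<Rightarrow> real"
  assumes grad: "\<And>y. GDERIV f y :> gradf y"
  shows "gradf \<in> borel_measurable borel"
proof -
  have [measurable]: "f \<in> borel_measurable borel"
    using continuous_on_GDERIV[OF grad] by (rule borel_measurable_continuous_onI)
  have component: "(\<lambda>y. inner (gradf y) b) \<in> borel_measurable borel" for b
  proof (rule borel_measurable_LIMSEQ_real)
    show "(\<lambda>k. (f (y + (1 / real (Suc k)) *\<^sub>R b) - f y) * real (Suc k))
        \<longlonglongrightarrow> inner (gradf y) b" for y
      by (rule GDERIV_difference_quotient_LIMSEQ[OF grad])
  qed measurable
  have "gradf = (\<lambda>y. \<Sum>b\<in>Basis. inner (gradf y) b *\<^sub>R b)"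
    by (simp add: euclidean_representation)
  also have "\<dots> \<in> borel_measurable borel"
    using component by (intro borel_measurable_sum borel_measurable_scaleR) auto
  finally show ?thesis .
qed

lemma smooth_norm_grad_le:
  fixes f :: "'v::real_inner \<Rightarrow> real"
  assumes below: "bdd_below (range f)" and L: "0 < L"
    and smooth: "\<And>u y. f u \<le> f y + inner (gradf y) (u - y) + L / 2 * (norm (u - y))^2"
  shows "(norm (gradf y))^2 \<le> 2 * L * (f y - (INF u. f u))"
proof -
  define u where "u = y - (1 / L) *\<^sub>R gradf y"
  have "(INF u. f u) \<le> f u" using below by (simp add: cInf_lower)
  also have "f u \<le> f y + inner (gradf y) (u - y) + L / 2 * (norm (u - y))^2" by (rule smooth)
  also have "\<dots> = f y - (norm (gradf y))^2 / (2 * L)"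
  proof -
    have "inner (gradf y) (u - y) = -((norm (gradf y))^2 / L)"
      by (simp add: u_def dot_square_norm)
    moreover have "(norm (u - y))^2 = (norm (gradf y))^2 / L^2"
      using L by (simp add: u_def power_divide)
    ultimately show ?thesis using L by (simp add: field_simps power2_eq_square)
  qed
  finally show ?thesis using L by (simp add: field_simps)
qed

lemma smooth_step_le:
  fixes f :: "'v::real_inner \<Rightarrow> real"
  assumes smooth: "\<And>u y. f u \<le> f y + inner (gradf y) (u - y) + L / 2 * (norm (u - y))^2"
  shows "f (y - \<gamma> *\<^sub>R (gradf y + e)) \<le> f y - (\<gamma> - L * \<gamma>^2 / 2) * (norm (gradf y))^2
           - (\<gamma> - L * \<gamma>^2) * inner (gradf y) e + L * \<gamma>^2 / 2 * (norm e)^2"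
proof -
  have "f (y - \<gamma> *\<^sub>R (gradf y + e)) \<le> f y + inner (gradf y) (- (\<gamma> *\<^sub>R (gradf y + e)))
      + L / 2 * (norm (- (\<gamma> *\<^sub>R (gradf y + e))))^2"
    using smooth[of "y - \<gamma> *\<^sub>R (gradf y + e)" y] by simp
  also have "\<dots> = f y - (\<gamma> - L * \<gamma>^2 / 2) * (norm (gradf y))^2
           - (\<gamma> - L * \<gamma>^2) * inner (gradf y) e + L * \<gamma>^2 / 2 * (norm e)^2"
    unfolding norm_minus_cancel power2_norm_eq_inner
    by (simp add: inner_add_left inner_add_right inner_commute power2_eq_square algebra_simps)
  finally show ?thesis .
qed

lemma smooth_PL_constant:
  fixes f :: "'v::real_inner \<Rightarrow> real"
  assumes below: "bdd_below (range f)" and L: "0 < L"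
    and smooth: "\<And>u y. f u \<le> f y + inner (gradf y) (u - y) + L / 2 * (norm (u - y))^2"
    and PL: "\<And>u. 2 * \<mu> * (f u - (INF u. f u)) \<le> (norm (gradf u))^2"
    and "L < \<mu>"
  shows "f u = (INF u. f u)"
proof -
  have "2 * \<mu> * (f u - (INF u. f u)) \<le> 2 * L * (f u - (INF u. f u))"
    using PL smooth_norm_grad_le[OF below L smooth] order_trans by blast
  then have "(\<mu> - L) * (f u - (INF u. f u)) \<le> 0"
    by (simp add: algebra_simps)
  moreover have "(INF u. f u) \<le> f u" using below by (simp add: cInf_lower)
  ultimately show ?thesis using \<open>L < \<mu>\<close> by (simp add: mult_le_0_iff)
qed


lemma integrable_of_square_integrable:
  fixes u :: "'a \<Rightarrow> 'v::euclidean_space"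
  assumes "prob_space M" "u \<in> borel_measurable M" "integrable M (\<lambda>\<omega>. (norm (u \<omega>))^2)"
  shows "integrable M u"
proof -
  interpret prob_space M by fact
  have "integrable M (\<lambda>\<omega>. norm (u \<omega>))"
    by (rule square_integrable_imp_integrable) (use assms(2,3) in auto)
  then show ?thesis using assms(2) by (simp add: integrable_norm_iff)
qed

lemma integrable_le_norm_mult:
  fixes u v :: "'a \<Rightarrow> 'v::real_normed_vector" and h :: "'a \<Rightarrow> real"
  assumes "integrable M (\<lambda>\<omega>. (norm (u \<omega>))^2)" "integrable M (\<lambda>\<omega>. (norm (v \<omega>))^2)"
    and "h \<in> borel_measurable M" and "\<And>\<omega>. \<bar>h \<omega>\<bar> \<le> norm (u \<omega>) * norm (v \<omega>)"
  shows "integrable M h"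
proof (rule Bochner_Integration.integrable_bound)
  show "integrable M (\<lambda>\<omega>. (norm (u \<omega>))^2 + (norm (v \<omega>))^2)" using assms(1,2) by simp
  show "AE \<omega> in M. norm (h \<omega>) \<le> norm ((norm (u \<omega>))^2 + (norm (v \<omega>))^2)"
  proof (intro AE_I2)
    fix \<omega>
    have "\<bar>h \<omega>\<bar> \<le> 2 * norm (u \<omega>) * norm (v \<omega>)"
      using assms(4)[of \<omega>] mult_nonneg_nonneg[OF norm_ge_zero norm_ge_zero, of "u \<omega>" "v \<omega>"]
      by linarith
    also have "\<dots> \<le> (norm (u \<omega>))^2 + (norm (v \<omega>))^2" by (rule sum_squares_bound)
    finally show "norm (h \<omega>) \<le> norm ((norm (u \<omega>))^2 + (norm (v \<omega>))^2)" by simp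
  qed
qed fact

lemma integrable_inner_mult_inner_Basis:
  fixes u v :: "'a \<Rightarrow> 'v::euclidean_space"
  assumes [measurable]: "u \<in> borel_measurable M" "v \<in> borel_measurable M"
    and "integrable M (\<lambda>\<omega>. (norm (u \<omega>))^2)" "integrable M (\<lambda>\<omega>. (norm (v \<omega>))^2)"
    and b: "b \<in> Basis" and c: "c \<in> Basis"
  shows "integrable M (\<lambda>\<omega>. inner (u \<omega>) b * inner (v \<omega>) c)"
proof (rule integrable_le_norm_mult[OF assms(3,4)])
  show "\<bar>inner (u \<omega>) b * inner (v \<omega>) c\<bar> \<le> norm (u \<omega>) * norm (v \<omega>)" for \<omega>
    unfolding abs_mult by (intro mult_mono Basis_le_norm b c) auto
qed measurable

lemma integrable_inner_of_square_integrable: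
  fixes u v :: "'a \<Rightarrow> 'v::euclidean_space"
  assumes [measurable]: "u \<in> borel_measurable M" "v \<in> borel_measurable M"
    and "integrable M (\<lambda>\<omega>. (norm (u \<omega>))^2)" "integrable M (\<lambda>\<omega>. (norm (v \<omega>))^2)"
  shows "integrable M (\<lambda>\<omega>. inner (u \<omega>) (v \<omega>))"
  by (rule integrable_le_norm_mult[OF assms(3,4)]) (auto simp: Cauchy_Schwarz_ineq2)

lemma integral_inner_eq_0_Basis:
  fixes u v :: "'a \<Rightarrow> 'v::euclidean_space"
  assumes "u \<in> borel_measurable M" "v \<in> borel_measurable M"
    and "integrable M (\<lambda>\<omega>. (norm (u \<omega>))^2)" "integrable M (\<lambda>\<omega>. (norm (v \<omega>))^2)"
    and "\<And>b. b \<in> Basis \<Longrightarrow> (\<integral>\<omega>. inner (u \<omega>) b * inner (v \<omega>) b \<partial>M) = 0"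
  shows "(\<integral>\<omega>. inner (u \<omega>) (v \<omega>) \<partial>M) = 0"
proof -
  have "(\<integral>\<omega>. inner (u \<omega>) (v \<omega>) \<partial>M) = (\<Sum>b\<in>Basis. \<integral>\<omega>. inner (u \<omega>) b * inner (v \<omega>) b \<partial>M)"
    by (subst euclidean_inner, rule Bochner_Integration.integral_sum,
        rule integrable_inner_mult_inner_Basis[OF assms(1-4)])
  also have "\<dots> = 0" using assms(5) by simp
  finally show ?thesis .
qed

lemma (in prob_space) integral_le_of_nn_cond_exp_le:
  assumes "sigma_finite_subalgebra M F" "h \<in> borel_measurable M" "\<And>\<omega>. 0 \<le> h \<omega>" "0 \<le> c"
    and "AE \<omega> in M. nn_cond_exp M F (\<lambda>\<omega>. ennreal (h \<omega>)) \<omega> \<le> ennreal c"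
  shows "integrable M h" "(\<integral>\<omega>. h \<omega> \<partial>M) \<le> c"
proof -
  interpret F: sigma_finite_subalgebra M F by fact
  have "(\<integral>\<^sup>+\<omega>. ennreal (h \<omega>) \<partial>M) = (\<integral>\<^sup>+\<omega>. 1 * nn_cond_exp M F (\<lambda>\<omega>. ennreal (h \<omega>)) \<omega> \<partial>M)"
    by (subst F.nn_cond_exp_intg) (use assms(2) in auto)
  also have "\<dots> \<le> (\<integral>\<^sup>+\<omega>. ennreal c \<partial>M)"
    by (rule nn_integral_mono_AE) (use assms(5) in auto)
  also have "\<dots> = ennreal c" by (simp add: emeasure_space_1)
  finally have le: "(\<integral>\<^sup>+\<omega>. ennreal (h \<omega>) \<partial>M) \<le> ennreal c" .
  then show "integrable M h"
    by (intro integrableI_nonneg) (use assms(2,3) in \<open>auto simp: top.not_eq_extremum intro: le_less_trans\<close>)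
  have "(\<integral>\<omega>. h \<omega> \<partial>M) = enn2real (\<integral>\<^sup>+\<omega>. ennreal (h \<omega>) \<partial>M)"
    by (rule integral_eq_nn_integral) (use assms(2,3) in auto)
  also have "\<dots> \<le> c" using le assms(4) by (simp add: enn2real_leI)
  finally show "(\<integral>\<omega>. h \<omega> \<partial>M) \<le> c" .
qed

lemma (in sigma_finite_subalgebra) integral_mult_eq_0_of_real_cond_exp_eq_0:
  assumes "integrable M (\<lambda>\<omega>. f \<omega> * g \<omega>)" "f \<in> borel_measurable F" "g \<in> borel_measurable M"
    and "AE \<omega> in M. real_cond_exp M F g \<omega> = 0"
  shows "(\<integral>\<omega>. f \<omega> * g \<omega> \<partial>M) = 0"
proof -
  have [measurable]: "f \<in> borel_measurable M"
    using measurable_from_subalg[OF subalg assms(2)] .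
  have "(\<integral>\<omega>. f \<omega> * g \<omega> \<partial>M) = (\<integral>\<omega>. f \<omega> * real_cond_exp M F g \<omega> \<partial>M)"
    using real_cond_exp_intg(2)[OF assms(1-3)] by simp
  also have "\<dots> = (\<integral>\<omega>. 0 \<partial>M)"
  proof (rule integral_cong_AE)
    show "AE \<omega> in M. f \<omega> * real_cond_exp M F g \<omega> = 0"
      using assms(4) by eventually_elim simp
  qed measurable
  finally show ?thesis by simp
qed

lemma cond_indep_vars_indicator_pair:
  assumes "cond_indep_vars M F X I" "i \<in> I" "j \<in> I" "i \<noteq> j"
    and "A \<in> sets (gen_sigma M {X i})" "B \<in> sets (gen_sigma M {X j})"
  shows "AE \<omega> in M. real_cond_exp M F (indicator (A \<inter> B)) \<omega>
           = real_cond_exp M F (indicator A) \<omega> * real_cond_exp M F (indicator B) \<omega>"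
proof -
  define C where "C = (\<lambda>k. if k = i then A else B)"
  have "AE \<omega> in M. real_cond_exp M F (indicator (\<Inter>k\<in>{i, j}. C k)) \<omega>
                   = (\<Prod>k\<in>{i, j}. real_cond_exp M F (indicator (C k)) \<omega>)"
    using assms(1) unfolding cond_indep_vars_def
    by (elim allE[of _ "{i, j}"] allE[of _ C]) (use assms(2-6) in \<open>auto simp: C_def\<close>)
  then show ?thesis using assms(4) by (simp add: C_def Int_commute)
qed


lemma integrable_mult_abs_le_1:
  fixes f g :: "'a \<Rightarrow> real"
  assumes "integrable M f" "g \<in> borel_measurable M" "AE \<omega> in M. \<bar>g \<omega>\<bar> \<le> 1"
  shows "integrable M (\<lambda>\<omega>. f \<omega> * g \<omega>)"
proof (rule Bochner_Integration.integrable_bound[OF assms(1)])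
  show "AE \<omega> in M. norm (f \<omega> * g \<omega>) \<le> norm (f \<omega>)"
    using assms(3) by eventually_elim (auto simp: abs_mult mult_left_le)
qed (use assms(1,2) in simp)

text \<open>
  The key step is E[Y | Fi] = 0: for A \<in> Fi and p = E[1_A | F], conditional independence makes
  1_A - p orthogonal to Fj and hence to Y, while p is F-measurable and hence orthogonal to Y.\<close>
lemma (in sigma_finite_subalgebra) cond_indep_integral_mult_eq_0:
  fixes X Y :: "'a \<Rightarrow> real"
  assumes M: "prob_space M"
    and Fi: "sigma_finite_subalgebra M Fi" and Fj: "sigma_finite_subalgebra M Fj"
    and indep: "\<And>A B. A \<in> sets Fi \<Longrightarrow> B \<in> sets Fj \<Longrightarrow>
        AE \<omega> in M. real_cond_exp M F (indicator (A \<inter> B)) \<omega>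
           = real_cond_exp M F (indicator A) \<omega> * real_cond_exp M F (indicator B) \<omega>"
    and Xm: "X \<in> borel_measurable Fi" and Ym: "Y \<in> borel_measurable Fj"
    and Yi: "integrable M Y" and XYi: "integrable M (\<lambda>\<omega>. X \<omega> * Y \<omega>)"
    and Y0: "AE \<omega> in M. real_cond_exp M F Y \<omega> = 0"
  shows "(\<integral>\<omega>. X \<omega> * Y \<omega> \<partial>M) = 0"
proof -
  interpret prob_space M by fact
  interpret Fi: sigma_finite_subalgebra M Fi by fact
  interpret Fj: sigma_finite_subalgebra M Fj by fact
  have [measurable]: "Y \<in> borel_measurable M"
    using Ym Fj.subalg measurable_from_subalg by blast
  have indicator_int: "integrable M (indicator A :: 'a \<Rightarrow> real)" if "A \<in> sets M" for A
    using that by (intro integrable_real_indicator) (auto simp: less_top[symmetric])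
  have cond_prob_bounds: "AE \<omega> in M. 0 \<le> real_cond_exp M F (indicator A) \<omega> \<and>
      real_cond_exp M F (indicator A) \<omega> \<le> 1" if "A \<in> sets M" for A
  proof -
    have "AE \<omega> in M. 0 \<le> real_cond_exp M F (indicator A) \<omega>"
      by (rule real_cond_exp_ge_c) (use that indicator_int in auto)
    moreover have "AE \<omega> in M. real_cond_exp M F (indicator A) \<omega> \<le> 1"
      by (rule real_cond_exp_le_c) (use that indicator_int in \<open>auto simp: indicator_def\<close>)
    ultimately show ?thesis by eventually_elim simp
  qed
  have indicator_Y: "(\<integral>\<omega>. indicator A \<omega> * Y \<omega> \<partial>M) = 0" if A: "A \<in> sets Fi" for A
  proof -
    have [measurable]: "A \<in> sets M" using A Fi.subalg by (auto simp: subalgebra_def)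
    define p where "p = real_cond_exp M F (indicator A)"
    have [measurable]: "p \<in> borel_measurable F" "p \<in> borel_measurable M"
      unfolding p_def by simp_all
    have p_int: "integrable M p" unfolding p_def using indicator_int by auto
    have p_abs: "AE \<omega> in M. \<bar>p \<omega>\<bar> \<le> 1"
      using cond_prob_bounds[OF \<open>A \<in> sets M\<close>] unfolding p_def by eventually_elim auto
    have diff_abs: "AE \<omega> in M. \<bar>indicator A \<omega> - p \<omega>\<bar> \<le> 1"
      using cond_prob_bounds[OF \<open>A \<in> sets M\<close>] unfolding p_def
      by eventually_elim (auto simp: indicator_def)
    have orth_Fj: "(\<integral>\<omega>\<in>B. (indicator A \<omega> - p \<omega>) \<partial>M) = (\<integral>\<omega>\<in>B. 0 \<partial>M)"
      if B: "B \<in> sets Fj" for B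
    proof -
      have [measurable]: "B \<in> sets M" using B Fj.subalg by (auto simp: subalgebra_def)
      define q where "q = real_cond_exp M F (indicator B)"
      have [measurable]: "q \<in> borel_measurable M" unfolding q_def by simp
      have "AE \<omega> in M. \<bar>q \<omega>\<bar> \<le> 1"
        using cond_prob_bounds[OF \<open>B \<in> sets M\<close>] unfolding q_def by eventually_elim auto
      then have pq_int: "integrable M (\<lambda>\<omega>. p \<omega> * q \<omega>)"
        by (intro integrable_mult_abs_le_1[OF p_int]) simp_all
      have "(\<integral>\<omega>. indicator B \<omega> * (indicator A \<omega> :: real) \<partial>M) = (\<integral>\<omega>. indicator (A \<inter> B) \<omega> \<partial>M)"
        by (rule Bochner_Integration.integral_cong) (auto simp: indicator_def)
      also have "\<dots> = (\<integral>\<omega>. real_cond_exp M F (indicator (A \<inter> B)) \<omega> \<partial>M)"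
        using indicator_int by (intro real_cond_exp_int(2)[symmetric]) auto
      also have "\<dots> = (\<integral>\<omega>. p \<omega> * q \<omega> \<partial>M)"
        using indep[OF A B] pq_int by (intro integral_cong_AE) (auto simp: p_def q_def)
      also have "\<dots> = (\<integral>\<omega>. p \<omega> * indicator B \<omega> \<partial>M)"
        unfolding q_def using integrable_mult_indicator[OF _ p_int, of B]
        by (intro real_cond_exp_intg(2)) (auto simp: mult.commute)
      finally have "(\<integral>\<omega>. indicator B \<omega> * (indicator A \<omega> :: real) \<partial>M) = (\<integral>\<omega>. indicator B \<omega> * p \<omega> \<partial>M)"
        by (simp add: mult.commute)
      then show ?thesis
        using integrable_mult_indicator[OF _ p_int, of B] integrable_mult_indicator[OF _ indicator_int, of B A]
        by (simp add: set_lebesgue_integral_def right_diff_distrib Bochner_Integration.integral_diff)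
    qed
    have diff_int: "integrable M (\<lambda>\<omega>. indicator A \<omega> - p \<omega>)" using p_int indicator_int by auto
    have "AE \<omega> in M. real_cond_exp M Fj (\<lambda>\<omega>. indicator A \<omega> - p \<omega>) \<omega> = 0"
      by (rule Fj.real_cond_exp_charact) (use orth_Fj diff_int in auto)
    moreover have diff_Y_int: "integrable M (\<lambda>\<omega>. Y \<omega> * (indicator A \<omega> - p \<omega>))"
      by (intro integrable_mult_abs_le_1[OF Yi] diff_abs) measurable
    ultimately have diff_Y: "(\<integral>\<omega>. Y \<omega> * (indicator A \<omega> - p \<omega>) \<partial>M) = 0"
      using Ym by (intro Fj.integral_mult_eq_0_of_real_cond_exp_eq_0) simp_all
    have Yp_int: "integrable M (\<lambda>\<omega>. Y \<omega> * p \<omega>)"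
      by (intro integrable_mult_abs_le_1[OF Yi] p_abs) measurable
    then have p_Y: "(\<integral>\<omega>. Y \<omega> * p \<omega> \<partial>M) = 0"
      using Y0 integral_mult_eq_0_of_real_cond_exp_eq_0[of p Y] by (simp add: mult.commute)
    have "(\<integral>\<omega>. indicator A \<omega> * Y \<omega> \<partial>M)
        = (\<integral>\<omega>. Y \<omega> * (indicator A \<omega> - p \<omega>) + Y \<omega> * p \<omega> \<partial>M)"
      by (rule Bochner_Integration.integral_cong) (auto simp: algebra_simps)
    also have "\<dots> = 0" using diff_Y_int Yp_int diff_Y p_Y by simp
    finally show ?thesis .
  qed
  have "AE \<omega> in M. real_cond_exp M Fi Y \<omega> = 0"
  proof (rule Fi.real_cond_exp_charact)
    show "(\<integral>\<omega>\<in>A. Y \<omega> \<partial>M) = (\<integral>\<omega>\<in>A. 0 \<partial>M)" if "A \<in> sets Fi" for A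
      using indicator_Y[OF that] by (simp add: set_lebesgue_integral_def)
  qed (use Yi in auto)
  then show ?thesis
    by (rule Fi.integral_mult_eq_0_of_real_cond_exp_eq_0[OF XYi Xm \<open>Y \<in> borel_measurable M\<close>])
qed


lemma (in sigma_finite_subalgebra) integral_inner_eq_0_of_real_cond_exp_eq_0:
  fixes D N :: "'a \<Rightarrow> 'v::euclidean_space"
  assumes [measurable]: "D \<in> borel_measurable F" "N \<in> borel_measurable M"
    and "integrable M (\<lambda>\<omega>. (norm (D \<omega>))^2)" "integrable M (\<lambda>\<omega>. (norm (N \<omega>))^2)"
    and "\<And>b. b \<in> Basis \<Longrightarrow> AE \<omega> in M. real_cond_exp M F (\<lambda>\<omega>. inner (N \<omega>) b) \<omega> = 0"
  shows "(\<integral>\<omega>. inner (D \<omega>) (N \<omega>) \<partial>M) = 0"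
proof -
  have [measurable]: "D \<in> borel_measurable M"
    using measurable_from_subalg[OF subalg assms(1)] .
  show ?thesis
  proof (rule integral_inner_eq_0_Basis[OF _ _ assms(3,4)])
    fix b :: 'v assume b: "b \<in> Basis"
    show "(\<integral>\<omega>. inner (D \<omega>) b * inner (N \<omega>) b \<partial>M) = 0"
      by (rule integral_mult_eq_0_of_real_cond_exp_eq_0)
        (use integrable_inner_mult_inner_Basis[OF _ _ assms(3,4) b b] assms(5)[OF b] in simp_all)
  qed simp_all
qed

lemma (in sigma_finite_subalgebra) cond_indep_integral_inner_eq_0:
  fixes N :: "'i \<Rightarrow> 'a \<Rightarrow> 'v::euclidean_space"
  assumes M: "prob_space M" and indep: "cond_indep_vars M F N I"
    and ij: "i \<in> I" "j \<in> I" "i \<noteq> j"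
    and [measurable]: "N i \<in> borel_measurable M" "N j \<in> borel_measurable M"
    and sq_int: "integrable M (\<lambda>\<omega>. (norm (N i \<omega>))^2)" "integrable M (\<lambda>\<omega>. (norm (N j \<omega>))^2)"
    and centered: "\<And>b. b \<in> Basis \<Longrightarrow> AE \<omega> in M. real_cond_exp M F (\<lambda>\<omega>. inner (N j \<omega>) b) \<omega> = 0"
  shows "(\<integral>\<omega>. inner (N i \<omega>) (N j \<omega>) \<partial>M) = 0"
proof (rule integral_inner_eq_0_Basis[OF _ _ sq_int])
  fix b :: 'v assume b: "b \<in> Basis"
  have Nj_int: "integrable M (N j)"
    by (rule integrable_of_square_integrable[OF M _ sq_int(2)]) simp
  show "(\<integral>\<omega>. inner (N i \<omega>) b * inner (N j \<omega>) b \<partial>M) = 0"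
  proof (rule cond_indep_integral_mult_eq_0[OF M])
    show "sigma_finite_subalgebra M (gen_sigma M {N i})" "sigma_finite_subalgebra M (gen_sigma M {N j})"
      by (rule sigma_finite_subalgebra_gen_sigma[OF M], simp)+
    have meas: "(\<lambda>\<omega>. inner (N k \<omega>) b) \<in> borel_measurable (gen_sigma M {N k})" for k
      using measurable_gen_sigma[of "N k" "{N k}" M] by measurable
    show "(\<lambda>\<omega>. inner (N i \<omega>) b) \<in> borel_measurable (gen_sigma M {N i})"
      "(\<lambda>\<omega>. inner (N j \<omega>) b) \<in> borel_measurable (gen_sigma M {N j})"
      by (rule meas)+
  qed (use cond_indep_vars_indicator_pair[OF indep ij] Nj_int centered[OF b]
          integrable_inner_mult_inner_Basis[OF _ _ sq_int b b] in auto)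
qed simp_all

lemma uniform_weights_simplex1:
  assumes "Gs \<subseteq> {1..n}" "Gs \<noteq> {}"
  shows "(\<lambda>i. if i \<in> Gs then 1 / real (card Gs) else 0) \<in> simplex1 n"
proof -
  have "finite Gs" using assms(1) finite_subset by blast
  then have "(\<Sum>i\<in>{1..n}. if i \<in> Gs then 1 / real (card Gs) else 0) = 1"
    using assms by (simp add: sum.If_cases Int_absorb1 card_gt_0_iff)
  then show ?thesis by (auto simp: simplex1_def)
qed


lemma expected_descent_step:
  fixes M :: "'a measure"
    and f :: "'v::euclidean_space \<Rightarrow> real" and gradf :: "'v \<Rightarrow> 'v"
    and X X' :: "'a \<Rightarrow> 'v" and g :: "nat \<Rightarrow> 'a \<Rightarrow> 'v"
  assumes M: "prob_space M"
    and below: "bdd_below (range f)"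
    and grad: "\<And>y. GDERIV f y :> gradf y"
    and Gs: "Gs \<subseteq> {1..n}" "Gs \<noteq> {}"
    and \<gamma>: "0 < \<gamma>" "L * \<gamma> \<le> 1 / 2"
    and L: "0 < L"
    and smooth: "\<And>u y. f u \<le> f y + inner (gradf y) (u - y) + L / 2 * (norm (u - y))^2"
    and \<sigma>: "0 \<le> \<sigma>"
    and X_meas: "X \<in> borel_measurable M"
    and g_meas: "\<And>i. i \<in> {1..n} \<Longrightarrow> g i \<in> borel_measurable M"
    and g_int: "\<And>i. i \<in> Gs \<Longrightarrow> integrable M (g i)"
    and fX_int: "integrable M (\<lambda>\<omega>. f (X \<omega>))"
    and fX'_int: "integrable M (\<lambda>\<omega>. f (X' \<omega>))"
    and unbiased: "\<And>i b. i \<in> Gs \<Longrightarrow> b \<in> Basis \<Longrightarrow>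
           AE \<omega> in M. real_cond_exp M (gen_sigma M {X}) (\<lambda>\<omega>'. inner (g i \<omega>') b) \<omega>
                         = inner (gradf (X \<omega>)) b"
    and bounded_var: "\<And>i. i \<in> Gs \<Longrightarrow>
           AE \<omega> in M. nn_cond_exp M (gen_sigma M {X})
                          (\<lambda>\<omega>'. ennreal ((norm (g i \<omega>' - gradf (X \<omega>')))^2)) \<omega>
                        \<le> ennreal (\<sigma>^2)"
    and noise_indep: "cond_indep_vars M (gen_sigma M {X}) (\<lambda>i \<omega>. g i \<omega> - gradf (X \<omega>)) Gs"
    and inexact: "AE \<omega> in M.
           real_cond_exp M (gen_sigma M ({X} \<union> g ` {1..n})) (\<lambda>\<omega>'. f (X' \<omega>')) \<omega>
           - (INF v\<in>simplex1 n. f (X \<omega> - \<gamma> *\<^sub>R (\<Sum>i\<in>{1..n}. v i *\<^sub>R g i \<omega>))) \<le> \<delta>"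
  shows "integrable M (\<lambda>\<omega>. (norm (gradf (X \<omega>)))^2)"
    "(\<integral>\<omega>. f (X' \<omega>) \<partial>M) \<le> (\<integral>\<omega>. f (X \<omega>) \<partial>M) - \<gamma> / 2 * (\<integral>\<omega>. (norm (gradf (X \<omega>)))^2 \<partial>M)
        + \<delta> + L * \<gamma>^2 * \<sigma>^2 / (2 * real (card Gs))"
proof -
  interpret prob_space M by fact
  define F where "F = gen_sigma M {X}"
  define D where "D = (\<lambda>\<omega>. gradf (X \<omega>))"
  define N where "N = (\<lambda>i \<omega>. g i \<omega> - gradf (X \<omega>))"
  define G where "G = real (card Gs)"
  have finGs: "finite Gs" using Gs(1) finite_subset by blast
  have G_pos: "0 < G" using finGs Gs(2) by (simp add: G_def card_gt_0_iff)
  interpret F: sigma_finite_subalgebra M F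
    unfolding F_def by (rule sigma_finite_subalgebra_gen_sigma[OF M]) (simp add: X_meas)
  note [measurable] = X_meas borel_measurable_GDERIV[OF grad]
    borel_measurable_continuous_onI[OF continuous_on_GDERIV[OF grad]]
  have [measurable]: "X \<in> borel_measurable F"
    unfolding F_def by (rule measurable_gen_sigma) simp
  have D_meas [measurable]: "D \<in> borel_measurable M" "D \<in> borel_measurable F"
    unfolding D_def by measurable
  have N_meas [measurable]: "N i \<in> borel_measurable M" if "i \<in> Gs" for i
  proof -
    have [measurable]: "g i \<in> borel_measurable M" using g_meas that Gs(1) by blast
    show ?thesis unfolding N_def by measurable
  qed
  have D_sq_int: "integrable M (\<lambda>\<omega>. (norm (D \<omega>))^2)"
  proof (rule Bochner_Integration.integrable_bound)
    show "integrable M (\<lambda>\<omega>. 2 * L * (f (X \<omega>) - (INF u. f u)))" using fX_int by simp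
    show "AE \<omega> in M. norm ((norm (D \<omega>))^2) \<le> norm (2 * L * (f (X \<omega>) - (INF u. f u)))"
      using smooth_norm_grad_le[OF below L smooth] by (intro AE_I2) (simp add: D_def order_trans[OF _ abs_ge_self])
  qed measurable
  then show "integrable M (\<lambda>\<omega>. (norm (gradf (X \<omega>)))^2)" by (simp add: D_def)
  have N_sq_int: "integrable M (\<lambda>\<omega>. (norm (N i \<omega>))^2)"
    and N_var: "(\<integral>\<omega>. (norm (N i \<omega>))^2 \<partial>M) \<le> \<sigma>^2" if i: "i \<in> Gs" for i
  proof -
    have "AE \<omega> in M. nn_cond_exp M F (\<lambda>\<omega>. ennreal ((norm (N i \<omega>))^2)) \<omega> \<le> ennreal (\<sigma>^2)"
      using bounded_var[OF i] by (simp add: F_def N_def)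
    then show "integrable M (\<lambda>\<omega>. (norm (N i \<omega>))^2)" "(\<integral>\<omega>. (norm (N i \<omega>))^2 \<partial>M) \<le> \<sigma>^2"
      using N_meas[OF i]
      by (intro integral_le_of_nn_cond_exp_le[OF F.sigma_finite_subalgebra_axioms]; simp)+
  qed
  have N_centered: "AE \<omega> in M. real_cond_exp M F (\<lambda>\<omega>. inner (N i \<omega>) b) \<omega> = 0"
    if i: "i \<in> Gs" and b: "b \<in> Basis" for i b
  proof -
    have D_int: "integrable M D" by (rule integrable_of_square_integrable[OF M D_meas(1) D_sq_int])
    have "AE \<omega> in M. real_cond_exp M F (\<lambda>\<omega>. inner (g i \<omega>) b - inner (D \<omega>) b) \<omega>
        = real_cond_exp M F (\<lambda>\<omega>. inner (g i \<omega>) b) \<omega> - real_cond_exp M F (\<lambda>\<omega>. inner (D \<omega>) b) \<omega>"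
      by (rule F.real_cond_exp_diff) (use g_int[OF i] D_int in auto)
    moreover have "AE \<omega> in M. real_cond_exp M F (\<lambda>\<omega>. inner (g i \<omega>) b) \<omega> = inner (D \<omega>) b"
      using unbiased[OF i b] by (simp add: F_def D_def)
    moreover have "AE \<omega> in M. real_cond_exp M F (\<lambda>\<omega>. inner (D \<omega>) b) \<omega> = inner (D \<omega>) b"
      by (rule F.real_cond_exp_F_meas) (use D_int in auto)
    ultimately show ?thesis by eventually_elim (simp add: N_def D_def inner_diff_left)
  qed
  have D_N: "(\<integral>\<omega>. inner (D \<omega>) (N i \<omega>) \<partial>M) = 0" if "i \<in> Gs" for i
    using that by (intro F.integral_inner_eq_0_of_real_cond_exp_eq_0 D_sq_int N_sq_int N_centered) simp_all
  have N_N: "(\<integral>\<omega>. inner (N i \<omega>) (N j \<omega>) \<partial>M) = 0" if "i \<in> Gs" "j \<in> Gs" "i \<noteq> j" for i j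
    using that noise_indep
    by (intro F.cond_indep_integral_inner_eq_0[OF M, where I=Gs] N_meas N_sq_int N_centered)
      (simp_all add: F_def N_def)
  define u where "u = (\<lambda>i. if i \<in> Gs then 1 / G else 0)"
  define e where "e = (\<lambda>\<omega>. (1 / G) *\<^sub>R (\<Sum>i\<in>Gs. N i \<omega>))"
  define R where "R = (\<lambda>\<omega>. \<delta> + f (X \<omega>) - (\<gamma> - L * \<gamma>^2 / 2) * (norm (D \<omega>))^2
      - (\<gamma> - L * \<gamma>^2) / G * (\<Sum>i\<in>Gs. inner (D \<omega>) (N i \<omega>))
      + L * \<gamma>^2 / (2 * G^2) * (\<Sum>i\<in>Gs. \<Sum>j\<in>Gs. inner (N i \<omega>) (N j \<omega>)))"
  have u_simplex: "u \<in> simplex1 n"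
    unfolding u_def G_def by (rule uniform_weights_simplex1[OF Gs])
  have uniform_step: "(\<Sum>i\<in>{1..n}. u i *\<^sub>R g i \<omega>) = D \<omega> + e \<omega>" for \<omega>
  proof -
    have "(\<Sum>i\<in>{1..n}. u i *\<^sub>R g i \<omega>) = (\<Sum>i\<in>Gs. (1 / G) *\<^sub>R (D \<omega> + N i \<omega>))"
      using Gs(1) by (intro sum.mono_neutral_cong_right) (auto simp: u_def N_def D_def)
    also have "\<dots> = D \<omega> + e \<omega>"
      using G_pos by (simp add: e_def sum.distrib scaleR_sum_right[symmetric] scaleR_add_right G_def
          sum_constant_scaleR)
    finally show ?thesis .
  qed
  have uniform_bound: "(INF v\<in>simplex1 n. f (X \<omega> - \<gamma> *\<^sub>R (\<Sum>i\<in>{1..n}. v i *\<^sub>R g i \<omega>))) \<le> R \<omega> - \<delta>"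
    for \<omega>
  proof -
    have "(INF v\<in>simplex1 n. f (X \<omega> - \<gamma> *\<^sub>R (\<Sum>i\<in>{1..n}. v i *\<^sub>R g i \<omega>)))
        \<le> f (X \<omega> - \<gamma> *\<^sub>R (D \<omega> + e \<omega>))"
      unfolding uniform_step[symmetric] using u_simplex below
      by (intro cINF_lower) (auto simp: bdd_below_def)
    also have "\<dots> \<le> R \<omega> - \<delta>"
      using smooth_step_le[OF smooth, of "X \<omega>" \<gamma> "e \<omega>"] G_pos
      by (simp add: R_def D_def e_def inner_sum_right power2_norm_eq_inner inner_sum_left
          power_divide sum_divide_distrib[symmetric] sum_distrib_left inner_commute)
    finally show ?thesis .
  qed
  define H where "H = gen_sigma M ({X} \<union> g ` {1..n})"
  interpret H: sigma_finite_subalgebra M H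
    unfolding H_def by (rule sigma_finite_subalgebra_gen_sigma[OF M]) (use g_meas X_meas in auto)
  have cond_le_R: "AE \<omega> in M. real_cond_exp M H (\<lambda>\<omega>. f (X' \<omega>)) \<omega> \<le> R \<omega>"
    using inexact
  proof eventually_elim
    case (elim \<omega>)
    then show ?case using uniform_bound[of \<omega>] unfolding H_def by linarith
  qed
  have N_N_int: "integrable M (\<lambda>\<omega>. inner (N i \<omega>) (N j \<omega>))" if "i \<in> Gs" "j \<in> Gs" for i j
    using that by (intro integrable_inner_of_square_integrable N_meas N_sq_int)
  have D_N_int: "integrable M (\<lambda>\<omega>. inner (D \<omega>) (N i \<omega>))" if "i \<in> Gs" for i
    using that by (intro integrable_inner_of_square_integrable D_meas N_meas D_sq_int N_sq_int)
  have R_int: "integrable M R"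
    unfolding R_def using fX_int D_sq_int D_N_int N_N_int by auto
  have "(\<integral>\<omega>. R \<omega> \<partial>M) = \<delta> + (\<integral>\<omega>. f (X \<omega>) \<partial>M) - (\<gamma> - L * \<gamma>^2 / 2) * (\<integral>\<omega>. (norm (D \<omega>))^2 \<partial>M)
      + L * \<gamma>^2 / (2 * G^2) * (\<Sum>i\<in>Gs. \<Sum>j\<in>Gs. \<integral>\<omega>. inner (N i \<omega>) (N j \<omega>) \<partial>M)"
    unfolding R_def using fX_int D_sq_int D_N_int N_N_int D_N
    by (simp add: Bochner_Integration.integral_sum integrable_sum prob_space)
  also have "(\<Sum>i\<in>Gs. \<Sum>j\<in>Gs. \<integral>\<omega>. inner (N i \<omega>) (N j \<omega>) \<partial>M) = (\<Sum>i\<in>Gs. \<integral>\<omega>. (norm (N i \<omega>))^2 \<partial>M)"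
  proof (rule sum.cong[OF refl])
    fix i assume i: "i \<in> Gs"
    have "(\<Sum>j\<in>Gs. \<integral>\<omega>. inner (N i \<omega>) (N j \<omega>) \<partial>M)
        = (\<Sum>j\<in>Gs. if j = i then \<integral>\<omega>. (norm (N i \<omega>))^2 \<partial>M else 0)"
      using i by (intro sum.cong refl) (auto simp: N_N power2_norm_eq_inner)
    then show "(\<Sum>j\<in>Gs. \<integral>\<omega>. inner (N i \<omega>) (N j \<omega>) \<partial>M) = (\<integral>\<omega>. (norm (N i \<omega>))^2 \<partial>M)"
      using finGs i by simp
  qed
  finally have R_integral: "(\<integral>\<omega>. R \<omega> \<partial>M) = \<delta> + (\<integral>\<omega>. f (X \<omega>) \<partial>M)
      - (\<gamma> - L * \<gamma>^2 / 2) * (\<integral>\<omega>. (norm (D \<omega>))^2 \<partial>M)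
      + L * \<gamma>^2 / (2 * G^2) * (\<Sum>i\<in>Gs. \<integral>\<omega>. (norm (N i \<omega>))^2 \<partial>M)" .
  have "L * \<gamma>^2 / (2 * G^2) * (\<Sum>i\<in>Gs. \<integral>\<omega>. (norm (N i \<omega>))^2 \<partial>M) \<le> L * \<gamma>^2 / (2 * G^2) * (G * \<sigma>^2)"
    using sum_mono[OF N_var] L by (intro mult_left_mono) (simp_all add: G_def)
  also have "\<dots> = L * \<gamma>^2 * \<sigma>^2 / (2 * G)"
    using G_pos by (simp add: power2_eq_square)
  finally have noise_term: "L * \<gamma>^2 / (2 * G^2) * (\<Sum>i\<in>Gs. \<integral>\<omega>. (norm (N i \<omega>))^2 \<partial>M)
      \<le> L * \<gamma>^2 * \<sigma>^2 / (2 * G)" .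
  have "L * \<gamma> * \<gamma> \<le> 1 / 2 * \<gamma>"
    using \<gamma> by (intro mult_right_mono) simp_all
  then have "\<gamma> / 2 \<le> \<gamma> - L * \<gamma>^2 / 2"
    using \<gamma>(1) by (simp add: power2_eq_square)
  then have gradient_term: "\<gamma> / 2 * (\<integral>\<omega>. (norm (D \<omega>))^2 \<partial>M)
      \<le> (\<gamma> - L * \<gamma>^2 / 2) * (\<integral>\<omega>. (norm (D \<omega>))^2 \<partial>M)"
    by (rule mult_right_mono) simp
  have "(\<integral>\<omega>. f (X' \<omega>) \<partial>M) = (\<integral>\<omega>. real_cond_exp M H (\<lambda>\<omega>. f (X' \<omega>)) \<omega> \<partial>M)"
    by (rule H.real_cond_exp_int(2)[symmetric, OF fX'_int])
  also have "\<dots> \<le> (\<integral>\<omega>. R \<omega> \<partial>M)"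
    by (rule integral_mono_AE[OF H.real_cond_exp_int(1)[OF fX'_int] R_int cond_le_R])
  finally show "(\<integral>\<omega>. f (X' \<omega>) \<partial>M) \<le> (\<integral>\<omega>. f (X \<omega>) \<partial>M) - \<gamma> / 2 * (\<integral>\<omega>. (norm (gradf (X \<omega>)))^2 \<partial>M)
        + \<delta> + L * \<gamma>^2 * \<sigma>^2 / (2 * real (card Gs))"
    using R_integral noise_term gradient_term by (simp add: D_def G_def)
qed


lemma average_bound_of_descent:
  fixes E a :: "nat \<Rightarrow> real"
  assumes descent: "\<And>t. E (Suc t) \<le> E t - \<gamma> / 2 * a t + c"
    and lower: "\<And>t. m \<le> E t" and \<gamma>: "0 < \<gamma>" and T: "1 \<le> T"
  shows "1 / real T * (\<Sum>t<T. a t) \<le> 2 * (E 0 - m) / (real T * \<gamma>) + 2 * c / \<gamma>"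
proof -
  have telescoped: "E T + \<gamma> / 2 * (\<Sum>t<T. a t) \<le> E 0 + real T * c" for T
  proof (induction T)
    case (Suc T)
    then show ?case using descent[of T] by (simp add: algebra_simps)
  qed simp
  have "\<gamma> / 2 * (\<Sum>t<T. a t) \<le> (E 0 - m) + real T * c"
    using telescoped[of T] lower[of T] by linarith
  then have "(\<Sum>t<T. a t) \<le> (2 * (E 0 - m) + 2 * real T * c) / \<gamma>"
    using \<gamma> by (simp add: field_simps)
  then show ?thesis
    using T \<gamma> by (simp add: field_simps divide_right_mono)
qed

lemma linear_recurrence_bound:
  fixes e :: "nat \<Rightarrow> real"
  assumes rec: "\<And>t. e (Suc t) \<le> q * e t + c" and q: "0 \<le> q" "q < 1" and c: "0 \<le> c"
  shows "e T \<le> q ^ T * e 0 + c / (1 - q)"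
proof -
  have partial_sum: "e t \<le> q ^ t * e 0 + c * (1 - q ^ t) / (1 - q)" for t
  proof (induction t)
    case (Suc t)
    have "e (Suc t) \<le> q * (q ^ t * e 0 + c * (1 - q ^ t) / (1 - q)) + c"
      using rec[of t] mult_left_mono[OF Suc.IH q(1)] by linarith
    also have "\<dots> = q ^ Suc t * e 0 + c * (1 - q ^ Suc t) / (1 - q)"
      using q(2) by (simp add: field_simps)
    finally show ?case .
  qed simp
  have "c * (1 - q ^ T) / (1 - q) \<le> c / (1 - q)"
    using q c by (intro divide_right_mono mult_left_le) simp_all
  then show ?thesis using partial_sum[of T] by linarith
qed

lemma PL_bound_of_descent:
  fixes E a :: "nat \<Rightarrow> real"
  assumes descent: "\<And>t. E (Suc t) \<le> E t - \<gamma> / 2 * a t + c"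
    and PL: "\<And>t. 2 * \<mu> * (E t - m) \<le> a t"
    and \<gamma>: "0 < \<gamma>" and \<mu>: "0 < \<mu>" "\<gamma> * \<mu> \<le> 1" and c: "0 \<le> c"
  shows "E T - m \<le> (1 - \<gamma> * \<mu>) ^ T * (E 0 - m) + c / (\<gamma> * \<mu>)"
proof -
  have "E (Suc t) - m \<le> (1 - \<gamma> * \<mu>) * (E t - m) + c" for t
    using descent[of t] mult_left_mono[OF PL[of t], of "\<gamma> / 2"] \<gamma>
    by (simp add: algebra_simps)
  from linear_recurrence_bound[where e="\<lambda>t. E t - m", OF this] show ?thesis
    using \<gamma> \<mu> c by simp
qed


theorem theorem1:
  fixes M :: "'a measure"
    and f :: "'v::euclidean_space \<Rightarrow> real" and gradf :: "'v \<Rightarrow> 'v"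
    and n :: nat and Gs :: "nat set"
    and x :: "nat \<Rightarrow> 'a \<Rightarrow> 'v" and g :: "nat \<Rightarrow> nat \<Rightarrow> 'a \<Rightarrow> 'v"
    and w :: "nat \<Rightarrow> 'a \<Rightarrow> nat \<Rightarrow> real"
    and x0 :: 'v and \<gamma> L \<sigma> \<delta> :: real
  assumes M: "prob_space M"
    and below: "bdd_below (range f)"
    and grad: "\<And>y. GDERIV f y :> gradf y"
    and n: "1 \<le> n"
    and Gs: "Gs \<subseteq> {1..n}" "Gs \<noteq> {}"
    and \<gamma>: "0 < \<gamma>" "\<gamma> \<le> 1 / (2 * L)"
    and L: "0 < L"
    and smooth: "\<And>u y. f u \<le> f y + inner (gradf y) (u - y) + L / 2 * (norm (u - y))^2"
    and \<sigma>: "0 \<le> \<sigma>" and \<delta>: "0 \<le> \<delta>"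
    and x_start: "\<And>\<omega>. x 0 \<omega> = x0"
    and x_step: "\<And>t \<omega>. \<omega> \<in> space M \<Longrightarrow>
           x (Suc t) \<omega> = x t \<omega> - \<gamma> *\<^sub>R (\<Sum>i\<in>{1..n}. w (Suc t) \<omega> i *\<^sub>R g t i \<omega>)"
    and w_simplex: "\<And>t \<omega>. \<omega> \<in> space M \<Longrightarrow> w (Suc t) \<omega> \<in> simplex1 n"
    and x_meas: "\<And>t. x t \<in> borel_measurable M"
    and g_meas: "\<And>t i. i \<in> {1..n} \<Longrightarrow> g t i \<in> borel_measurable M"
    and g_int: "\<And>t i. i \<in> Gs \<Longrightarrow> integrable M (g t i)"
    and f_int: "\<And>t. integrable M (\<lambda>\<omega>. f (x t \<omega>))"
    and unbiased: "\<And>t i b. i \<in> Gs \<Longrightarrow> b \<in> Basis \<Longrightarrow>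
           AE \<omega> in M. real_cond_exp M (gen_sigma M {x t}) (\<lambda>\<omega>'. inner (g t i \<omega>') b) \<omega>
                         = inner (gradf (x t \<omega>)) b"
    and bounded_var: "\<And>t i. i \<in> Gs \<Longrightarrow>
           AE \<omega> in M. nn_cond_exp M (gen_sigma M {x t})
                          (\<lambda>\<omega>'. ennreal ((norm (g t i \<omega>' - gradf (x t \<omega>')))^2)) \<omega>
                        \<le> ennreal (\<sigma>^2)"
    and noise_indep: "\<And>t. cond_indep_vars M (gen_sigma M {x t})
           (\<lambda>i \<omega>. g t i \<omega> - gradf (x t \<omega>)) Gs"
    and inexact: "\<And>t. AE \<omega> in M.
           real_cond_exp M (gen_sigma M ({x t} \<union> g t ` {1..n})) (\<lambda>\<omega>'. f (x (Suc t) \<omega>')) \<omega>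
           - (INF v\<in>simplex1 n. f (x t \<omega> - \<gamma> *\<^sub>R (\<Sum>i\<in>{1..n}. v i *\<^sub>R g t i \<omega>))) \<le> \<delta>"
  shows "(\<forall>T::nat. 1 \<le> T \<longrightarrow>
            (1 / real T) * (\<Sum>t<T. integral\<^sup>L M (\<lambda>\<omega>. (norm (gradf (x t \<omega>)))^2))
            \<le> 2 * (f x0 - (INF u. f u)) / (real T * \<gamma>) + 2 * \<sigma>^2 * \<gamma> * L / real (card Gs)
              + 2 * \<delta> / \<gamma>)
       \<and> (\<forall>\<mu>::real. 0 < \<mu> \<longrightarrow>
            (\<forall>u. (INF u. f u) \<ge> f u - 1 / (2 * \<mu>) * (norm (gradf u))^2) \<longrightarrow>
            (\<forall>T::nat. 1 \<le> T \<longrightarrow>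
               integral\<^sup>L M (\<lambda>\<omega>. f (x T \<omega>)) - (INF u. f u)
               \<le> (1 - \<gamma> * \<mu>)^T * (f x0 - (INF u. f u))
                 + \<sigma>^2 * \<gamma> * L / (\<mu> * real (card Gs)) + \<delta> / (\<gamma> * \<mu>)))"
proof -
  interpret prob_space M by fact
  define fs where "fs = (INF u. f u)"
  define E where "E = (\<lambda>t. \<integral>\<omega>. f (x t \<omega>) \<partial>M)"
  define a where "a = (\<lambda>t. \<integral>\<omega>. (norm (gradf (x t \<omega>)))^2 \<partial>M)"
  define G where "G = real (card Gs)"
  define c where "c = \<delta> + L * \<gamma>^2 * \<sigma>^2 / (2 * G)"
  have G_pos: "0 < G"
    using Gs finite_subset[OF Gs(1)] by (simp add: G_def card_gt_0_iff)
  have "L * \<gamma> \<le> 1 / 2" using \<gamma>(2) L by (simp add: field_simps)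
  note step = expected_descent_step[OF M below grad Gs \<gamma>(1) this L smooth \<sigma> x_meas g_meas g_int
      f_int f_int unbiased bounded_var noise_indep inexact]
  have descent: "E (Suc t) \<le> E t - \<gamma> / 2 * a t + c" for t
    using step(2)[of t] unfolding E_def a_def c_def G_def by linarith
  have E_lower: "fs \<le> E t" for t
    using integral_mono[OF integrable_const f_int[of t]] below
    by (simp add: E_def fs_def prob_space cInf_lower)
  have E0: "E 0 = f x0" by (simp add: E_def x_start prob_space)
  have c_nonneg: "0 \<le> c" using \<delta> L G_pos by (simp add: c_def)
  show ?thesis
  proof (intro conjI allI impI)
    fix T :: nat assume "1 \<le> T"
    have "2 * c / \<gamma> = 2 * \<delta> / \<gamma> + L * \<gamma> * \<sigma>^2 / G"
      using \<gamma>(1) G_pos by (simp add: c_def field_simps power2_eq_square)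
    also have "\<dots> \<le> 2 * \<delta> / \<gamma> + 2 * \<sigma>^2 * \<gamma> * L / G"
      using \<gamma>(1) L G_pos by (simp add: divide_right_mono)
    finally show "1 / real T * (\<Sum>t<T. \<integral>\<omega>. (norm (gradf (x t \<omega>)))^2 \<partial>M)
        \<le> 2 * (f x0 - (INF u. f u)) / (real T * \<gamma>) + 2 * \<sigma>^2 * \<gamma> * L / real (card Gs) + 2 * \<delta> / \<gamma>"
      using average_bound_of_descent[where E=E and a=a, OF descent E_lower \<gamma>(1) \<open>1 \<le> T\<close>]
      unfolding a_def E0 fs_def G_def by linarith
  next
    fix \<mu> :: real and T :: nat
    assume \<mu>: "0 < \<mu>" and PL: "\<forall>u. (INF u. f u) \<ge> f u - 1 / (2 * \<mu>) * (norm (gradf u))^2"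
    have PL': "2 * \<mu> * (f u - fs) \<le> (norm (gradf u))^2" for u
      using PL \<mu> by (simp add: fs_def field_simps)
    show "integral\<^sup>L M (\<lambda>\<omega>. f (x T \<omega>)) - (INF u. f u) \<le> (1 - \<gamma> * \<mu>) ^ T * (f x0 - (INF u. f u))
        + \<sigma>^2 * \<gamma> * L / (\<mu> * real (card Gs)) + \<delta> / (\<gamma> * \<mu>)"
    proof (cases "\<gamma> * \<mu> \<le> 1")
      case True
      have E_PL: "2 * \<mu> * (E t - fs) \<le> a t" for t
        using integral_mono[OF _ step(1) PL'] f_int by (simp add: E_def a_def prob_space)
      have "c / (\<gamma> * \<mu>) = \<delta> / (\<gamma> * \<mu>) + L * \<gamma> * \<sigma>^2 / (2 * \<mu> * G)"
        using \<gamma>(1) \<mu> G_pos by (simp add: c_def field_simps power2_eq_square)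
      also have "\<dots> \<le> \<delta> / (\<gamma> * \<mu>) + \<sigma>^2 * \<gamma> * L / (\<mu> * G)"
        using \<gamma>(1) \<mu> L G_pos by (simp add: field_simps)
      finally show ?thesis
        using PL_bound_of_descent[where E=E and a=a, OF descent E_PL \<gamma>(1) \<mu> True c_nonneg, of T]
        unfolding E0 unfolding E_def fs_def G_def by linarith
    next
      case False
      then have "L * \<gamma> < \<mu> * \<gamma>" using \<open>L * \<gamma> \<le> 1 / 2\<close> by (simp add: algebra_simps)
      then have "L < \<mu>" using \<gamma>(1) by simp
      then have f_const: "f u = fs" for u
        unfolding fs_def by (rule smooth_PL_constant[OF below L smooth PL'[unfolded fs_def]])
      have "0 \<le> \<sigma>^2 * \<gamma> * L / (\<mu> * real (card Gs)) + \<delta> / (\<gamma> * \<mu>)"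
        using \<gamma>(1) \<mu> L \<delta> by simp
      then show ?thesis
        unfolding fs_def[symmetric] by (simp add: f_const prob_space)
    qed
  qed
qed

end
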